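(* Let $\mu$ be the uniform probability measure on $\{-1,1\}^n$ and let $\nu=e^f d\mu$ be a probability measure on $\{-1,1\}^n$ (with $f:\{-1,1\}^n\to\mathbb{R}$). Let $$\mathcal{I}(\nu)=\int I\big(\nabla\Lambda_\mu(\nabla f(x))\big)\,d\nu(x),$$ where $\nabla f$ is the discrete gradient of $f$. Then $$\mathcal{I}(\nu)\le H(\nu|\mu)+\kappa\int\sup_{y\in\{-1,1\}^n}\langle\nabla f(y),x\rangle\,d\mu(x),$$ where $\kappa$ is a universal constant.
   Context: Discrete gradient: $\nabla f(x)=(\partial_1f(x),\dots,\partial_nf(x))$ with $\partial_if(x)=\frac12(f(x_+)-f(x_-))$, where $x_\pm$ is $x$ with $i$-th coordinate replaced by $\pm1$. $\Lambda_\mu(\xi)=\log\int e^{\langle\xi,x\rangle}d\mu(x)=\sum_i\log\cosh\xi_i$, so $\nabla\Lambda_\mu(\xi)=(\tanh\xi_1,\dots,\tanh\xi_n)$. $I(x)=\sum_{i=1}^n\big(\frac{1+x_i}{2}\log(1+x_i)+\frac{1-x_i}{2}\log(1-x_i)\big)$ on $[-1,1]^n$. $H(\nu|\mu)$ is the relative entropy. *)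

theory Defs
  imports "HOL-Analysis.Analysis"
begin

definition cube :: "nat \<Rightarrow> (nat \<Rightarrow> real) set" where
  "cube n = PiE {..<n} (\<lambda>_. {-1, 1})"

definition unif_int :: "nat \<Rightarrow> ((nat \<Rightarrow> real) \<Rightarrow> real) \<Rightarrow> real" where
  "unif_int n g = (\<Sum>x\<in>cube n. g x) / real (card (cube n))"

definition dpartial :: "((nat \<Rightarrow> real) \<Rightarrow> real) \<Rightarrow> nat \<Rightarrow> (nat \<Rightarrow> real) \<Rightarrow> real" where
  "dpartial f i x = (f (x(i := 1)) - f (x(i := -1))) / 2"

definition dgrad :: "((nat \<Rightarrow> real) \<Rightarrow> real) \<Rightarrow> (nat \<Rightarrow> real) \<Rightarrow> (nat \<Rightarrow> real)" where
  "dgrad f x = (\<lambda>i. dpartial f i x)"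

text \<open>Gradient of Lambda_mu(xi) = sum log cosh xi_i.\<close>
definition grad_Lambda :: "(nat \<Rightarrow> real) \<Rightarrow> (nat \<Rightarrow> real)" where
  "grad_Lambda \<xi> = (\<lambda>i. tanh (\<xi> i))"

definition inner_n :: "nat \<Rightarrow> (nat \<Rightarrow> real) \<Rightarrow> (nat \<Rightarrow> real) \<Rightarrow> real" where
  "inner_n n u v = (\<Sum>i<n. u i * v i)"

definition Irate :: "nat \<Rightarrow> (nat \<Rightarrow> real) \<Rightarrow> real" where
  "Irate n x = (\<Sum>i<n. (1 + x i) / 2 * ln (1 + x i) + (1 - x i) / 2 * ln (1 - x i))"

text \<open>For nu = e^f dmu: the functional I(nu) and the relative entropy H(nu|mu) = int f dnu.\<close>
definition calI :: "nat \<Rightarrow> ((nat \<Rightarrow> real) \<Rightarrow> real) \<Rightarrow> real" where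
  "calI n f = unif_int n (\<lambda>x. exp (f x) * Irate n (grad_Lambda (dgrad f x)))"

definition rel_entropy :: "nat \<Rightarrow> ((nat \<Rightarrow> real) \<Rightarrow> real) \<Rightarrow> real" where
  "rel_entropy n f = unif_int n (\<lambda>x. exp (f x) * f x)"

end

theory Submission
  imports Defs
begin

text \<open>
  Write \<open>\<nu>\<close> in chain-rule form: its density is \<open>\<Prod>\<^sub>k (1 + x\<^sub>k m\<^sub>k(x)) / 2\<close>, where
  \<open>m\<^sub>k(x)\<close> is the \<open>\<nu>\<close>-conditional mean of \<open>x\<^sub>k\<close> given \<open>x\<^sub>0, \<dots>, x\<^sub>k\<^sub>-\<^sub>1\<close>. Since \<open>I' = artanh\<close>,
  convexity of \<open>I\<close> at \<open>tanh \<partial>\<^sub>kf\<close> gives, with \<open>d\<^sub>k = x\<^sub>k - m\<^sub>k\<close>,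
  \<open>I(tanh \<partial>\<^sub>kf) \<le> ln (1 + x\<^sub>k m\<^sub>k) - d\<^sub>k artanh m\<^sub>k + \<partial>\<^sub>kf (tanh \<partial>\<^sub>kf - x\<^sub>k) + \<partial>\<^sub>kf d\<^sub>k\<close>.
  Integrated against \<open>\<nu>\<close>, the first terms add up to \<open>H(\<nu>|\<mu>)\<close>, the second vanish because
  \<open>d\<^sub>k\<close> is a martingale difference, and the third vanish because \<open>tanh \<partial>\<^sub>kf(x)\<close> is the
  conditional mean of \<open>x\<^sub>k\<close> given the other coordinates. For the last term, the product
  measures on the cube with means \<open>d(x)/2\<close>, mixed over \<open>x \<sim> \<nu>\<close>, give exactly \<open>\<mu>\<close>; this
  coupling bounds \<open>\<integral>\<langle>\<nabla>f, d\<rangle> d\<nu>\<close> by \<open>2 \<integral> sup\<^sub>y \<langle>\<nabla>f(y), e\<rangle> d\<mu>(e)\<close>, so \<open>\<kappa> = 2\<close> works.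
\<close>

lemma finite_cube [simp]: "finite (cube n)"
  unfolding cube_def by (simp add: finite_PiE)

lemma card_cube: "card (cube n) = 2 ^ n"
  unfolding cube_def by (simp add: card_PiE eval_nat_numeral)

lemma unif_int_eq: "unif_int n h = (\<Sum>x\<in>cube n. h x) / 2 ^ n"
  unfolding unif_int_def card_cube by simp

lemma cube_coord: "y \<in> cube n \<Longrightarrow> k < n \<Longrightarrow> y k = 1 \<or> y k = -1"
  unfolding cube_def by auto

lemma cube_upd: "y \<in> cube n \<Longrightarrow> k < n \<Longrightarrow> s = 1 \<or> s = -1 \<Longrightarrow> y(k := s) \<in> cube n"
  unfolding cube_def by (auto simp: PiE_def extensional_def Pi_def)

lemma cube_eqI: "y \<in> cube n \<Longrightarrow> z \<in> cube n \<Longrightarrow> (\<And>k. k < n \<Longrightarrow> y k = z k) \<Longrightarrow> y = z"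
  unfolding cube_def by (rule PiE_ext) auto

lemma sum_cube_Suc:
  "(\<Sum>y\<in>cube (Suc n). h y) = (\<Sum>y\<in>cube n. h (y(n := 1)) + h (y(n := -1)))"
proof -
  have inj: "inj_on (\<lambda>(s, y). y(n := s)) ({-1, 1} \<times> cube n)"
    unfolding cube_def by (rule inj_combinator) simp
  have "(\<Sum>y\<in>cube (Suc n). h y) = (\<Sum>(s, y)\<in>{-1, 1} \<times> cube n. h (y(n := s)))"
    unfolding cube_def lessThan_Suc PiE_insert_eq
    by (subst sum.reindex[OF inj[unfolded cube_def]]) (simp add: case_prod_unfold)
  also have "\<dots> = (\<Sum>y\<in>cube n. h (y(n := 1)) + h (y(n := -1)))"
    by (simp add: sum.cartesian_product[symmetric] sum.distrib add.commute)
  finally show ?thesis .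
qed

lemma sum_cube_flip:
  fixes h :: "(nat \<Rightarrow> real) \<Rightarrow> real"
  assumes "k < n"
  shows "(\<Sum>x\<in>cube n. h x) = (\<Sum>x\<in>cube n. (h (x(k := 1)) + h (x(k := -1))) / 2)"
proof -
  define \<sigma> where "\<sigma> x = x(k := - x k)" for x :: "nat \<Rightarrow> real"
  have \<sigma>_cube: "\<sigma> x \<in> cube n" if "x \<in> cube n" for x
    unfolding \<sigma>_def using cube_upd[OF that assms] cube_coord[OF that assms] by auto
  have \<sigma>_\<sigma>: "\<sigma> (\<sigma> x) = x" for x
    unfolding \<sigma>_def by simp
  have "2 * (\<Sum>x\<in>cube n. h x) = (\<Sum>x\<in>cube n. h x) + (\<Sum>x\<in>cube n. h (\<sigma> x))"
    by (simp add: sum.reindex_bij_witness[where i = \<sigma> and j = \<sigma>] \<sigma>_cube \<sigma>_\<sigma>)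
  also have "\<dots> = (\<Sum>x\<in>cube n. h (x(k := 1)) + h (x(k := -1)))"
    unfolding sum.distrib[symmetric]
  proof (rule sum.cong[OF refl])
    fix x assume "x \<in> cube n"
    then show "h x + h (\<sigma> x) = h (x(k := 1)) + h (x(k := -1))"
      using cube_coord[OF _ assms, of x] fun_upd_triv[of x k] unfolding \<sigma>_def
      by (metis add.commute minus_minus)
  qed
  finally show ?thesis
    by (simp add: sum_divide_distrib[symmetric])
qed

section \<open>Sequential densities on the cube\<close>

definition predictable :: "(nat \<Rightarrow> (nat \<Rightarrow> real) \<Rightarrow> real) \<Rightarrow> bool" where
  "predictable r \<longleftrightarrow> (\<forall>k y z. (\<forall>j<k. y j = z j) \<longrightarrow> r k y = r k z)"

lemma predictableD: "predictable r \<Longrightarrow> \<forall>j<k. y j = z j \<Longrightarrow> r k y = r k z"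
  unfolding predictable_def by blast

text \<open>
  For predictable \<open>r\<close> with \<open>\<bar>r\<bar> \<le> 1\<close>, this is the law of \<open>y\<close> when \<open>y\<^sub>0, y\<^sub>1, \<dots>\<close> are drawn
  in turn, \<open>y\<^sub>k = \<plusminus>1\<close> with conditional mean \<open>r\<^sub>k(y)\<close>.
\<close>
definition sequential_density ::
    "nat \<Rightarrow> (nat \<Rightarrow> (nat \<Rightarrow> real) \<Rightarrow> real) \<Rightarrow> (nat \<Rightarrow> real) \<Rightarrow> real" where
  "sequential_density n r y = (\<Prod>k<n. (1 + y k * r k y) / 2)"

lemma sum_sequential_density:
  assumes "predictable r"
  shows "(\<Sum>y\<in>cube n. sequential_density n r y) = 1"
proof (induction n)
  case 0
  then show ?case by (simp add: cube_def sequential_density_def)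
next
  case (Suc n)
  have r_upd: "r k (y(n := s)) = r k y" if "k \<le> n" for k y s
    using assms that unfolding predictable_def by auto
  have "(\<Prod>k<n. (1 + (y(n := s)) k * r k (y(n := s))) / 2) = sequential_density n r y" for y s
    unfolding sequential_density_def by (rule prod.cong) (auto simp: r_upd)
  then have upd: "sequential_density (Suc n) r (y(n := s))
                  = sequential_density n r y * ((1 + s * r n y) / 2)" for y s
    unfolding sequential_density_def[of "Suc n"] prod.lessThan_Suc r_upd[OF order_refl] by simp
  have "sequential_density (Suc n) r (y(n := 1)) + sequential_density (Suc n) r (y(n := -1))
           = sequential_density n r y" for y
    unfolding upd by (simp add: field_simps)
  then show ?case
    by (simp add: sum_cube_Suc Suc.IH)
qed

lemma sequential_density_nonneg:
  assumes "y \<in> cube n" "\<And>k. k < n \<Longrightarrow> \<bar>r k y\<bar> \<le> 1"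
  shows "sequential_density n r y \<ge> 0"
  unfolding sequential_density_def
proof (rule prod_nonneg)
  fix k assume "k \<in> {..<n}"
  then show "0 \<le> (1 + y k * r k y) / 2"
    using cube_coord[OF assms(1)] assms(2) by (force simp: abs_le_iff)
qed

lemma ln_sequential_density:
  assumes "y \<in> cube n" "\<And>k. k < n \<Longrightarrow> \<bar>r k y\<bar> < 1"
  shows "ln (2 ^ n * sequential_density n r y) = (\<Sum>k<n. ln (1 + y k * r k y))"
proof -
  have nonzero: "1 + y k * r k y \<noteq> 0" if "k \<in> {..<n}" for k
    using that cube_coord[OF assms(1), of k] assms(2)[of k] by (auto simp: abs_less_iff)
  have "2 ^ n * sequential_density n r y = (\<Prod>k<n. 1 + y k * r k y)"
    unfolding sequential_density_def by (simp add: prod_dividef)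
  then show ?thesis
    by (simp only:) (rule ln_prod[OF finite_lessThan nonzero])
qed

lemma sequential_density_tilt:
  assumes "y \<in> cube n"
  shows "sequential_density n (\<lambda>k y. r k y + b k y * (1 - (r k y)\<^sup>2)) y
       = sequential_density n r y * (\<Prod>k<n. 1 + b k y * (y k - r k y))"
  unfolding sequential_density_def prod.distrib[symmetric]
proof (rule prod.cong[OF refl])
  fix k assume "k \<in> {..<n}"
  then have "y k = 1 \<or> y k = -1"
    using cube_coord[OF assms] by simp
  then show "(1 + y k * (r k y + b k y * (1 - (r k y)\<^sup>2))) / 2
           = (1 + y k * r k y) / 2 * (1 + b k y * (y k - r k y))"
    by (elim disjE) (simp_all add: field_simps power2_eq_square)
qed

lemma predictable_tilt:
  "predictable r \<Longrightarrow> predictable b \<Longrightarrow> predictable (\<lambda>k y. r k y + b k y * (1 - (r k y)\<^sup>2))"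
  unfolding predictable_def by metis

lemma sum_sequential_density_martingale:
  assumes r: "predictable r" and k: "k < n"
    and b: "\<And>y z. (\<forall>j<k. y j = z j) \<Longrightarrow> b y = b z"
  shows "(\<Sum>y\<in>cube n. sequential_density n r y * ((y k - r k y) * b y)) = 0"
proof -
  define b' where "b' j y = (if j = k then b y else 0)" for j y
  have "predictable b'"
    unfolding predictable_def b'_def using b by auto
  then have "1 = (\<Sum>y\<in>cube n. sequential_density n (\<lambda>j y. r j y + b' j y * (1 - (r j y)\<^sup>2)) y)"
    by (rule sum_sequential_density[OF predictable_tilt[OF r], symmetric])
  also have "\<dots> = (\<Sum>y\<in>cube n. sequential_density n r y * (\<Prod>j<n. 1 + b' j y * (y j - r j y)))"
    by (intro sum.cong) (simp_all add: sequential_density_tilt)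
  also have "\<dots> = (\<Sum>y\<in>cube n. sequential_density n r y * (1 + b y * (y k - r k y)))"
  proof -
    have "(\<Prod>j<n. 1 + b' j y * (y j - r j y)) = (\<Prod>j<n. if j = k then 1 + b y * (y k - r k y) else 1)"
      for y
      unfolding b'_def by (rule prod.cong) auto
    then show ?thesis
      using k by simp
  qed
  also have "\<dots> = 1 + (\<Sum>y\<in>cube n. sequential_density n r y * ((y k - r k y) * b y))"
    by (simp only: distrib_left mult_1_right sum.distrib sum_sequential_density[OF r]) (simp add: mult_ac)
  finally show ?thesis by simp
qed

lemma sum_product_density_inner:
  "(\<Sum>e\<in>cube n. sequential_density n (\<lambda>k _. c k) e * inner_n n v e) = inner_n n v c"
proof -
  have const: "predictable (\<lambda>k _. c k)"
    unfolding predictable_def by simp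
  have "(\<Sum>e\<in>cube n. sequential_density n (\<lambda>k _. c k) e * e k) = c k" if "k < n" for k
    using sum_sequential_density_martingale[OF const that, of "\<lambda>_. 1"]
    by (simp add: algebra_simps sum_subtractf sum_distrib_left[symmetric] sum_sequential_density[OF const])
  then have "(\<Sum>e\<in>cube n. sequential_density n (\<lambda>k _. c k) e * (v k * e k)) = v k * c k"
    if "k < n" for k
    using that by (simp add: sum_distrib_left[symmetric] mult.left_commute[of _ "v k"])
  then show ?thesis
    unfolding inner_n_def sum_distrib_left by (subst sum.swap) simp
qed

lemma sum_sequential_density_coupling:
  assumes "predictable r"
  shows "(\<Sum>y\<in>cube n. sequential_density n r y * sequential_density n (\<lambda>k _. (y k - r k y) / 2) e)
       = 1 / 2 ^ n"
proof -
  have "predictable (\<lambda>k _. e k / 2)"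
    unfolding predictable_def by simp
  then have "1 = (\<Sum>y\<in>cube n. sequential_density n (\<lambda>k y. r k y + e k / 2 * (1 - (r k y)\<^sup>2)) y)"
    by (rule sum_sequential_density[OF predictable_tilt[OF assms], symmetric])
  also have "\<dots> = (\<Sum>y\<in>cube n. sequential_density n r y * (\<Prod>k<n. 1 + e k / 2 * (y k - r k y)))"
    by (intro sum.cong refl sequential_density_tilt)
  also have "\<dots> = (\<Sum>y\<in>cube n. 2 ^ n * (sequential_density n r y
                     * sequential_density n (\<lambda>k _. (y k - r k y) / 2) e))"
    by (simp add: sequential_density_def prod_dividef algebra_simps)
  also have "\<dots> = 2 ^ n * (\<Sum>y\<in>cube n. sequential_density n r y
                     * sequential_density n (\<lambda>k _. (y k - r k y) / 2) e)"
    by (simp add: sum_distrib_left)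
  finally show ?thesis
    by (simp add: field_simps)
qed

text \<open>
  Mixing the product measures with means \<open>(y - r(y))/2\<close> over \<open>y\<close> gives the uniform measure,
  so the supremum over \<open>y\<close> can be taken inside the integral against the uniform measure.
\<close>
lemma sum_sequential_density_inner_le_Max:
  assumes r: "predictable r" and r_bound: "\<And>y k. y \<in> cube n \<Longrightarrow> k < n \<Longrightarrow> \<bar>r k y\<bar> \<le> 1"
  shows "(\<Sum>y\<in>cube n. sequential_density n r y * inner_n n (G y) (\<lambda>k. y k - r k y))
       \<le> 2 * unif_int n (\<lambda>e. Max ((\<lambda>y. inner_n n (G y) e) ` cube n))"
proof -
  define D where "D y = sequential_density n (\<lambda>k _. (y k - r k y) / 2)" for y
  define M where "M e = Max ((\<lambda>y. inner_n n (G y) e) ` cube n)" for e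
  have half_bound: "\<bar>(y k - r k y) / 2\<bar> \<le> 1" if "y \<in> cube n" "k < n" for y k
    using cube_coord[OF that] r_bound[OF that] by (auto simp: abs_le_iff)
  have D_nonneg: "D y e \<ge> 0" if "y \<in> cube n" "e \<in> cube n" for y e
    unfolding D_def by (rule sequential_density_nonneg[OF that(2) half_bound[OF that(1)]])
  have q_nonneg: "sequential_density n r y \<ge> 0" if "y \<in> cube n" for y
  proof (rule sequential_density_nonneg[OF that])
    show "\<bar>r k y\<bar> \<le> 1" if "k < n" for k
      using r_bound \<open>y \<in> cube n\<close> that by blast
  qed
  have "inner_n n (G y) (\<lambda>k. y k - r k y) = 2 * (\<Sum>e\<in>cube n. D y e * inner_n n (G y) e)" for y
    unfolding D_def sum_product_density_inner by (simp add: inner_n_def sum_distrib_left)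
  then have "(\<Sum>y\<in>cube n. sequential_density n r y * inner_n n (G y) (\<lambda>k. y k - r k y))
      = 2 * (\<Sum>y\<in>cube n. sequential_density n r y * (\<Sum>e\<in>cube n. D y e * inner_n n (G y) e))"
    by (simp add: sum_distrib_left algebra_simps)
  also have "\<dots> \<le> 2 * (\<Sum>y\<in>cube n. sequential_density n r y * (\<Sum>e\<in>cube n. D y e * M e))"
    unfolding M_def
    by (intro mult_left_mono sum_mono mult_left_mono Max_ge) (auto simp: D_nonneg q_nonneg)
  also have "\<dots> = 2 * (\<Sum>e\<in>cube n. M e * (\<Sum>y\<in>cube n. sequential_density n r y * D y e))"
    unfolding sum_distrib_left by (subst sum.swap) (simp add: mult_ac)
  also have "\<dots> = 2 * unif_int n M"
    unfolding D_def sum_sequential_density_coupling[OF r] unif_int_eq by (simp add: sum_divide_distrib)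
  finally show ?thesis
    unfolding M_def .
qed

section \<open>Chain rule on the cube\<close>

definition cylinder_mass :: "nat \<Rightarrow> ((nat \<Rightarrow> real) \<Rightarrow> real) \<Rightarrow> nat \<Rightarrow> (nat \<Rightarrow> real) \<Rightarrow> real" where
  "cylinder_mass n p k y = (\<Sum>z\<in>cube n. if \<forall>j<k. z j = y j then p z else 0)"

definition cond_mean :: "nat \<Rightarrow> ((nat \<Rightarrow> real) \<Rightarrow> real) \<Rightarrow> nat \<Rightarrow> (nat \<Rightarrow> real) \<Rightarrow> real" where
  "cond_mean n p k y =
     (cylinder_mass n p (Suc k) (y(k := 1)) - cylinder_mass n p (Suc k) (y(k := -1)))
       / cylinder_mass n p k y"

lemma cylinder_mass_cong: "(\<forall>j<k. y j = z j) \<Longrightarrow> cylinder_mass n p k y = cylinder_mass n p k z"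
  unfolding cylinder_mass_def by (intro sum.cong) auto

lemma predictable_cond_mean: "predictable (cond_mean n p)"
  unfolding predictable_def
proof (intro allI impI)
  fix k and y z :: "nat \<Rightarrow> real"
  assume agree: "\<forall>j<k. y j = z j"
  then have "cylinder_mass n p (Suc k) (y(k := s)) = cylinder_mass n p (Suc k) (z(k := s))" for s
    by (intro cylinder_mass_cong) (simp add: less_Suc_eq)
  then show "cond_mean n p k y = cond_mean n p k z"
    unfolding cond_mean_def using cylinder_mass_cong[OF agree] by simp
qed

lemma cylinder_mass_split:
  assumes "y \<in> cube n" "k < n"
  shows "cylinder_mass n p k y = cylinder_mass n p (Suc k) (y(k := 1)) + cylinder_mass n p (Suc k) (y(k := -1))"
  unfolding cylinder_mass_def sum.distrib[symmetric]
proof (rule sum.cong[OF refl])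
  fix z assume "z \<in> cube n"
  then have "z k = 1 \<or> z k = -1"
    using cube_coord assms(2) by blast
  then show "(if \<forall>j<k. z j = y j then p z else 0) =
      (if \<forall>j<Suc k. z j = (y(k := 1)) j then p z else 0) + (if \<forall>j<Suc k. z j = (y(k := -1)) j then p z else 0)"
    by (auto simp: less_Suc_eq)
qed

lemma cylinder_mass_pos:
  assumes "y \<in> cube n" "\<And>z. z \<in> cube n \<Longrightarrow> p z > 0"
  shows "cylinder_mass n p k y > 0"
proof -
  have "p y \<le> cylinder_mass n p k y"
    unfolding cylinder_mass_def
    using member_le_sum[of y "cube n" "\<lambda>z. if \<forall>j<k. z j = y j then p z else 0"] assms
    by (simp add: less_imp_le)
  then show ?thesis
    using assms by (meson less_le_trans)
qed

lemma
  assumes "y \<in> cube n" "k < n" "\<And>z. z \<in> cube n \<Longrightarrow> p z > 0"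
  shows abs_cond_mean_less_1: "\<bar>cond_mean n p k y\<bar> < 1"
    and cond_mean_factor: "(1 + y k * cond_mean n p k y) / 2 = cylinder_mass n p (Suc k) y / cylinder_mass n p k y"
proof -
  have pos: "cylinder_mass n p (Suc k) (y(k := s)) > 0" if "s = 1 \<or> s = -1" for s
    using cylinder_mass_pos[OF cube_upd[OF assms(1,2) that] assms(3)] .
  show "\<bar>cond_mean n p k y\<bar> < 1"
    unfolding cond_mean_def cylinder_mass_split[OF assms(1,2)]
    using pos[of 1] pos[of "-1"] by (auto simp: abs_less_iff field_simps)
  have "y k = 1 \<and> y(k := 1) = y \<or> y k = -1 \<and> y(k := -1) = y"
    using cube_coord[OF assms(1,2)] fun_upd_triv[of y k] by auto
  then show "(1 + y k * cond_mean n p k y) / 2 = cylinder_mass n p (Suc k) y / cylinder_mass n p k y"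
    unfolding cond_mean_def cylinder_mass_split[OF assms(1,2)]
    using pos[of 1] pos[of "-1"] by (auto simp: field_simps)
qed

lemma sequential_density_cond_mean:
  assumes "y \<in> cube n" "\<And>z. z \<in> cube n \<Longrightarrow> p z > 0" "(\<Sum>z\<in>cube n. p z) = 1"
  shows "sequential_density n (cond_mean n p) y = p y"
proof -
  have mass_0: "cylinder_mass n p 0 y = 1"
    using assms(3) by (simp add: cylinder_mass_def)
  have "(\<forall>j<n. z j = y j) \<longleftrightarrow> z = y" if "z \<in> cube n" for z
    using cube_eqI[OF that assms(1)] by auto
  then have mass_n: "cylinder_mass n p n y = p y"
    unfolding cylinder_mass_def using assms(1) by (simp cong: sum.cong)
  have "sequential_density n (cond_mean n p) y = (\<Prod>k<n. cylinder_mass n p (Suc k) y / cylinder_mass n p k y)"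
    unfolding sequential_density_def
    by (rule prod.cong[OF refl]) (simp add: cond_mean_factor[OF assms(1) _ assms(2)])
  also have "\<dots> = cylinder_mass n p n y / cylinder_mass n p 0 y"
    using cylinder_mass_pos[OF assms(1,2)]
    by (intro prod_lessThan_telescope[where f = "\<lambda>k. cylinder_mass n p k y"]) (simp add: less_imp_neq[symmetric])
  also have "\<dots> = p y"
    unfolding mass_0 mass_n by simp
  finally show ?thesis .
qed

section \<open>One-coordinate estimates\<close>

definition Irate1 :: "real \<Rightarrow> real" where
  "Irate1 t = (1 + t) / 2 * ln (1 + t) + (1 - t) / 2 * ln (1 - t)"

lemma Irate_eq_sum: "Irate n x = (\<Sum>i<n. Irate1 (x i))"
  unfolding Irate_def Irate1_def ..

lemma mult_ln_le:
  fixes u v :: real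
  assumes "u \<ge> 0" "v > 0"
  shows "u * ln v \<le> u * ln u + (v - u)"
proof (cases "u = 0")
  case False
  then have "u > 0"
    using assms(1) by simp
  have "u * (ln v - ln u) = u * ln (v / u)"
    using \<open>u > 0\<close> assms(2) by (simp add: ln_div)
  also have "\<dots> \<le> u * (v / u - 1)"
    using \<open>u > 0\<close> assms(2) by (intro mult_left_mono ln_le_minus_one) auto
  also have "\<dots> = v - u"
    using \<open>u > 0\<close> by (simp add: field_simps)
  finally show ?thesis
    by (simp add: right_diff_distrib)
qed (use assms in simp)

lemma artanh_eq_ln_diff: "\<bar>t\<bar> < 1 \<Longrightarrow> artanh t = (ln (1 + t) - ln (1 - t)) / 2"
  for t :: real
  unfolding artanh_def by (auto simp: ln_div abs_less_iff)

text \<open>\<open>Irate1\<close> is convex with derivative \<open>artanh\<close>.\<close>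
lemma Irate1_tangent_le:
  fixes t m :: real
  assumes "\<bar>t\<bar> < 1" "\<bar>m\<bar> \<le> 1"
  shows "Irate1 t + artanh t * (m - t) \<le> Irate1 m"
proof -
  have "Irate1 t + artanh t * (m - t) = ((1 + m) * ln (1 + t) + (1 - m) * ln (1 - t)) / 2"
    unfolding Irate1_def artanh_eq_ln_diff[OF assms(1)] by (simp add: field_simps)
  moreover have "(1 + m) * ln (1 + t) \<le> (1 + m) * ln (1 + m) + ((1 + t) - (1 + m))"
    using assms by (intro mult_ln_le) auto
  moreover have "(1 - m) * ln (1 - t) \<le> (1 - m) * ln (1 - m) + ((1 - t) - (1 - m))"
    using assms by (intro mult_ln_le) auto
  ultimately show ?thesis
    by (simp add: Irate1_def field_simps)
qed

lemma Irate1_eq_ln_artanh: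
  assumes "s = 1 \<or> s = -1" "\<bar>m\<bar> < 1"
  shows "Irate1 m = ln (1 + s * m) - (s - m) * artanh m"
  using assms(1) unfolding Irate1_def artanh_eq_ln_diff[OF assms(2)] by (auto simp: field_simps)

lemma Irate1_tanh_le:
  assumes "s = 1 \<or> s = -1" "\<bar>m\<bar> < 1"
  shows "Irate1 (tanh g) \<le> ln (1 + s * m) - (s - m) * artanh m + g * (tanh g - s) + g * (s - m)"
proof -
  have "\<bar>tanh g\<bar> < 1"
    using tanh_real_bounds[of g] by auto
  then have "Irate1 (tanh g) + g * (m - tanh g) \<le> Irate1 m"
    using Irate1_tangent_le[of "tanh g" m] assms(2) by (simp add: artanh_tanh_real)
  then show ?thesis
    unfolding Irate1_eq_ln_artanh[OF assms] by (simp add: algebra_simps)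
qed

lemma tanh_half_diff: "(exp a + exp b) * tanh ((a - b) / 2) = exp a - exp b"
  for a b :: real
proof -
  define u c where "u = (a - b) / 2" and "c = exp ((a + b) / 2)"
  have "exp a = c * exp u" "exp b = c * exp (- u)"
    unfolding u_def c_def by (simp_all add: exp_add[symmetric] field_simps)
  moreover have "exp u + exp (- u) \<noteq> 0"
    by (simp add: add_pos_pos less_imp_neq[symmetric])
  ultimately show ?thesis
    unfolding tanh_altdef u_def[symmetric] by (simp add: field_simps)
qed

text \<open>\<open>tanh (\<partial>\<^sub>kf)\<close> is the conditional mean of \<open>x\<^sub>k\<close> under \<open>e\<^sup>f\<close> given the other coordinates.\<close>
lemma sum_exp_tanh_dpartial_eq_0:
  assumes "k < n" "\<And>x s. h (x(k := s)) = h x"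
  shows "(\<Sum>x\<in>cube n. exp (f x) * (h x * (tanh (dpartial f k x) - x k))) = 0"
proof -
  have "exp (f (x(k := 1))) * (h x * (tanh (dpartial f k x) - 1))
      + exp (f (x(k := -1))) * (h x * (tanh (dpartial f k x) + 1)) = 0" for x
  proof -
    have "exp (f (x(k := 1))) * (h x * (tanh (dpartial f k x) - 1))
        + exp (f (x(k := -1))) * (h x * (tanh (dpartial f k x) + 1))
        = h x * ((exp (f (x(k := 1))) + exp (f (x(k := -1)))) * tanh (dpartial f k x)
                 - (exp (f (x(k := 1))) - exp (f (x(k := -1)))))"
      by (simp add: algebra_simps)
    also have "\<dots> = 0"
      unfolding dpartial_def tanh_half_diff by simp
    finally show ?thesis .
  qed
  moreover have "dpartial f k (x(k := s)) = dpartial f k x" for x s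
    unfolding dpartial_def by simp
  ultimately show ?thesis
    by (subst sum_cube_flip[OF assms(1)]) (simp add: assms(2))
qed

lemma calI_le_of_sequential_density:
  assumes m: "predictable m" and m_bound: "\<And>x k. x \<in> cube n \<Longrightarrow> k < n \<Longrightarrow> \<bar>m k x\<bar> < 1"
    and density: "\<And>x. x \<in> cube n \<Longrightarrow> exp (f x) = 2 ^ n * sequential_density n m x"
  shows "calI n f \<le> rel_entropy n f + 2 * unif_int n (\<lambda>x. Max ((\<lambda>y. inner_n n (dgrad f y) x) ` cube n))"
proof -
  define q where "q = sequential_density n m"
  have q_nonneg: "q x \<ge> 0" if "x \<in> cube n" for x
    unfolding q_def using that m_bound by (intro sequential_density_nonneg) (auto simp: less_imp_le)
  have q_eq: "q x = exp (f x) / 2 ^ n" if "x \<in> cube n" for x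
    unfolding q_def density[OF that] by simp
  have entropy: "(\<Sum>k<n. ln (1 + x k * m k x)) = f x" if "x \<in> cube n" for x
    using ln_sequential_density[where r = m, OF that m_bound[OF that]] density[OF that] by (metis ln_exp)
  have flip: "(\<Sum>x\<in>cube n. q x * (dpartial f k x * (tanh (dpartial f k x) - x k))) = 0" if "k < n" for k
    using sum_exp_tanh_dpartial_eq_0[OF that, of "dpartial f k" f]
    by (simp add: q_eq dpartial_def sum_divide_distrib[symmetric] cong: sum.cong)
  have "calI n f = (\<Sum>x\<in>cube n. q x * (\<Sum>k<n. Irate1 (tanh (dpartial f k x))))"
    unfolding calI_def unif_int_eq Irate_eq_sum grad_Lambda_def dgrad_def
    by (simp add: q_eq sum_divide_distrib cong: sum.cong)
  also have "\<dots> \<le> (\<Sum>x\<in>cube n. q x * (\<Sum>k<n. ln (1 + x k * m k x) - (x k - m k x) * artanh (m k x)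
      + dpartial f k x * (tanh (dpartial f k x) - x k) + dpartial f k x * (x k - m k x)))"
    by (intro sum_mono mult_left_mono) (simp_all add: Irate1_tanh_le cube_coord m_bound q_nonneg)
  also have "\<dots> = (\<Sum>x\<in>cube n. q x * f x)
      - (\<Sum>k<n. \<Sum>x\<in>cube n. q x * ((x k - m k x) * artanh (m k x)))
      + (\<Sum>k<n. \<Sum>x\<in>cube n. q x * (dpartial f k x * (tanh (dpartial f k x) - x k)))
      + (\<Sum>x\<in>cube n. q x * inner_n n (dgrad f x) (\<lambda>k. x k - m k x))"
    by (simp add: sum.distrib sum_subtractf sum_distrib_left algebra_simps entropy[symmetric]
        inner_n_def dgrad_def sum.swap[of _ "{..<n}" "cube n"] cong: sum.cong)
  also have "(\<Sum>x\<in>cube n. q x * f x) = rel_entropy n f"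
    unfolding rel_entropy_def unif_int_eq by (simp add: q_eq sum_divide_distrib cong: sum.cong)
  also have "(\<Sum>k<n. \<Sum>x\<in>cube n. q x * ((x k - m k x) * artanh (m k x))) = 0"
    unfolding q_def
    by (rule sum.neutral[OF ballI], rule sum_sequential_density_martingale[OF m])
      (auto intro: arg_cong[where f = artanh] predictableD[OF m])
  also have "(\<Sum>k<n. \<Sum>x\<in>cube n. q x * (dpartial f k x * (tanh (dpartial f k x) - x k))) = 0"
    by (simp add: flip)
  also have "(\<Sum>x\<in>cube n. q x * inner_n n (dgrad f x) (\<lambda>k. x k - m k x))
      \<le> 2 * unif_int n (\<lambda>x. Max ((\<lambda>y. inner_n n (dgrad f y) x) ` cube n))"
    unfolding q_def by (rule sum_sequential_density_inner_le_Max[OF m]) (simp add: m_bound less_imp_le)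
  finally show ?thesis
    by simp
qed

theorem proposition2p14:
  "\<exists>\<kappa>::real. \<forall>(n::nat) (f::(nat \<Rightarrow> real) \<Rightarrow> real).
     unif_int n (\<lambda>x. exp (f x)) = 1 \<longrightarrow>
     calI n f \<le> rel_entropy n f
       + \<kappa> * unif_int n (\<lambda>x. Max ((\<lambda>y. inner_n n (dgrad f y) x) ` cube n))"
proof (intro exI[of _ 2] allI impI)
  fix n and f :: "(nat \<Rightarrow> real) \<Rightarrow> real"
  assume "unif_int n (\<lambda>x. exp (f x)) = 1"
  define p where "p x = exp (f x) / 2 ^ n" for x
  have p_pos: "\<And>x. p x > 0" and p_sum: "(\<Sum>x\<in>cube n. p x) = 1"
    using \<open>unif_int n (\<lambda>x. exp (f x)) = 1\<close> unfolding p_def unif_int_eq by (simp_all add: sum_divide_distrib)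
  show "calI n f \<le> rel_entropy n f + 2 * unif_int n (\<lambda>x. Max ((\<lambda>y. inner_n n (dgrad f y) x) ` cube n))"
  proof (rule calI_le_of_sequential_density[OF predictable_cond_mean])
    show "\<bar>cond_mean n p k x\<bar> < 1" if "x \<in> cube n" "k < n" for x k
      using that p_pos by (rule abs_cond_mean_less_1)
    show "exp (f x) = 2 ^ n * sequential_density n (cond_mean n p) x" if "x \<in> cube n" for x
      unfolding sequential_density_cond_mean[OF that p_pos p_sum] p_def by simp
  qed
qed

end
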